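(* Let $(X,Y)$ be a random pair with values in $\mathcal X\times\{1,\dots,K\}$, let $f:\mathcal X\to\Delta^K$ be a probabilistic classifier, and let $\ell:\mathcal X\times\{1,\dots,K\}\to\mathbb R$ be a loss with $\ell(X,Y)$ and $R(X,Y)\ell(X,Y)$ integrable. Suppose that either (i) $\mathbb E[(R(X,Y)-1)(\ell(X,Y)-1)]\ge -\mathbb E[\ell(X,Y)]$, or (ii) $f(X)_Y>0$ almost surely and $\ell$ is the cross-entropy loss $\ell(X,Y)=-\log f(X)_Y$. Then $$\mathbb E[R(X,Y)-1]\le \mathbb E[R(X,Y)\cdot \ell(X,Y)].$$
   Context: For $x\in\mathcal X$ and $y\in\{1,\dots,K\}$, the label rank is $R(x,y)=\sum_{l=1}^K \mathbf 1[f(x)_l\ge f(x)_y]$, where $f(x)_l$ is the $l$-th coordinate of $f(x)\in\Delta^K$ (the probability simplex). *)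

theory Defs
  imports "HOL-Probability.Probability"
begin

definition in_simplex :: "nat \<Rightarrow> (nat \<Rightarrow> real) \<Rightarrow> bool" where
  "in_simplex K p \<longleftrightarrow> (\<forall>l\<in>{1..K}. 0 \<le> p l) \<and> (\<Sum>l=1..K. p l) = 1"

definition label_rank :: "nat \<Rightarrow> ('x \<Rightarrow> nat \<Rightarrow> real) \<Rightarrow> 'x \<Rightarrow> nat \<Rightarrow> real" where
  "label_rank K f x y = (\<Sum>l=1..K. if f x l \<ge> f x y then 1 else 0)"

end

theory Submission
  imports Defs
begin

text \<open>
  Write R for the label rank and p = f(x)_y. Condition (i) is just a rearrangement: expanding
  (R - 1)(\<ell> - 1) = R \<ell> - \<ell> - (R - 1), the assumed bound says exactly E[R - 1] \<le> E[R \<ell>].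
  For the cross-entropy loss the bound holds pointwise: the R labels whose probability is at
  least p carry total mass at least R p, so R p \<le> 1, i.e. -ln p \<ge> ln R; and R - 1 \<le> R ln R for
  R \<ge> 1 since ln R \<ge> 1 - 1/R.
\<close>

lemma minus_one_le_mult_ln:
  fixes r :: real
  assumes "r \<ge> 1"
  shows "r - 1 \<le> r * ln r"
proof -
  have "1 - 1 / r \<le> ln r"
    using ln_le_minus_one[of "1 / r"] assms by (simp add: ln_div)
  then have "r * (1 - 1 / r) \<le> r * ln r"
    using assms by (intro mult_left_mono) auto
  moreover have "r * (1 - 1 / r) = r - 1"
    using assms by (simp add: field_simps)
  ultimately show ?thesis
    by simp
qed

lemma label_rank_nonneg: "0 \<le> label_rank K f x y"
  unfolding label_rank_def by (intro sum_nonneg) auto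

lemma label_rank_le_card: "label_rank K f x y \<le> real K"
proof -
  have "label_rank K f x y \<le> (\<Sum>l=1..K. 1)"
    unfolding label_rank_def by (intro sum_mono) auto
  then show ?thesis by simp
qed

lemma label_rank_ge_one:
  assumes "y \<in> {1..K}"
  shows "1 \<le> label_rank K f x y"
proof -
  have "(\<Sum>l\<in>{y}. if f x l \<ge> f x y then 1 else 0) \<le> label_rank K f x y"
    unfolding label_rank_def using assms by (intro sum_mono2) auto
  then show ?thesis by simp
qed

lemma label_rank_mult_le_one:
  assumes "in_simplex K (f x)"
  shows "label_rank K f x y * f x y \<le> 1"
proof -
  have "label_rank K f x y * f x y = (\<Sum>l=1..K. if f x l \<ge> f x y then f x y else 0)"
    unfolding label_rank_def sum_distrib_right by (intro sum.cong) auto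
  also have "\<dots> \<le> (\<Sum>l=1..K. f x l)"
    using assms unfolding in_simplex_def by (intro sum_mono) auto
  also have "\<dots> = 1"
    using assms unfolding in_simplex_def by simp
  finally show ?thesis .
qed

lemma label_rank_minus_one_le_cross_entropy:
  assumes "in_simplex K (f x)" and "y \<in> {1..K}" and "0 < f x y"
  shows "label_rank K f x y - 1 \<le> label_rank K f x y * - ln (f x y)"
proof -
  let ?R = "label_rank K f x y"
  have R: "1 \<le> ?R"
    using assms(2) by (rule label_rank_ge_one)
  have "f x y \<le> 1 / ?R"
    using label_rank_mult_le_one[of K f x y, OF assms(1)] R by (simp add: field_simps)
  then have "ln ?R \<le> - ln (f x y)"
    using R assms(3) ln_mono[of "f x y" "1 / ?R"] by (simp add: ln_div)
  then have "?R * ln ?R \<le> ?R * - ln (f x y)"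
    using R by (intro mult_left_mono) auto
  then show ?thesis
    using minus_one_le_mult_ln[OF R] by linarith
qed

lemma measurable_label_rank:
  assumes X: "X \<in> measurable M N"
    and Y: "Y \<in> measurable M (count_space UNIV)"
    and Y_range: "\<forall>\<omega>\<in>space M. Y \<omega> \<in> {1..K}"
    and f: "\<forall>l\<in>{1..K}. (\<lambda>x. f x l) \<in> borel_measurable N"
  shows "(\<lambda>\<omega>. label_rank K f (X \<omega>) (Y \<omega>)) \<in> borel_measurable M"
proof -
  define g where "g y \<omega> = (if y \<in> {1..K} then label_rank K f (X \<omega>) y else 0)" for y \<omega>
  have f_X: "(\<lambda>\<omega>. f (X \<omega>) l) \<in> borel_measurable M" if "l \<in> {1..K}" for l
    using measurable_compose[OF X] f that by blast
  have "g y \<in> borel_measurable M" for y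
  proof (cases "y \<in> {1..K}")
    case True
    have "(\<lambda>\<omega>. if f (X \<omega>) y \<le> f (X \<omega>) l then 1 else 0 :: real) \<in> borel_measurable M"
      if "l \<in> {1..K}" for l
      by (intro measurable_If borel_measurable_const borel_measurable_le f_X True that)
    then show ?thesis
      using True unfolding g_def label_rank_def by (simp add: borel_measurable_sum)
  next
    case False
    then show ?thesis
      unfolding g_def if_not_P[OF False] by simp
  qed
  then have "(\<lambda>\<omega>. g (Y \<omega>) \<omega>) \<in> borel_measurable M"
    by (rule measurable_compose_countable'[OF _ Y]) auto
  then show ?thesis
    by (rule measurable_cong[THEN iffD1, rotated]) (use Y_range in \<open>simp add: g_def\<close>)
qed

lemma integral_minus_one_le_integral_mult:
  fixes R L :: "'a \<Rightarrow> real"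
  assumes "integrable M R" and "integrable M L" and "integrable M (\<lambda>\<omega>. R \<omega> * L \<omega>)"
    and "finite_measure M"
    and "- (\<integral>\<omega>. L \<omega> \<partial>M) \<le> (\<integral>\<omega>. (R \<omega> - 1) * (L \<omega> - 1) \<partial>M)"
  shows "(\<integral>\<omega>. R \<omega> - 1 \<partial>M) \<le> (\<integral>\<omega>. R \<omega> * L \<omega> \<partial>M)"
proof -
  interpret finite_measure M by fact
  have "integrable M (\<lambda>\<omega>. R \<omega> - 1)"
    using assms(1) by simp
  moreover have "(\<lambda>\<omega>. (R \<omega> - 1) * (L \<omega> - 1)) = (\<lambda>\<omega>. (R \<omega> * L \<omega> - L \<omega>) - (R \<omega> - 1))"
    by (auto simp: algebra_simps)
  ultimately have "(\<integral>\<omega>. (R \<omega> - 1) * (L \<omega> - 1) \<partial>M)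
      = (\<integral>\<omega>. R \<omega> * L \<omega> \<partial>M) - (\<integral>\<omega>. L \<omega> \<partial>M) - (\<integral>\<omega>. R \<omega> - 1 \<partial>M)"
    using assms by (simp add: Bochner_Integration.integral_diff)
  then show ?thesis
    using assms(5) by linarith
qed

theorem theorem2:
  fixes M :: "'w measure" and N :: "'x measure"
    and X :: "'w \<Rightarrow> 'x" and Y :: "'w \<Rightarrow> nat" and K :: nat
    and f :: "'x \<Rightarrow> nat \<Rightarrow> real" and loss :: "'x \<Rightarrow> nat \<Rightarrow> real"
  assumes "prob_space M"
    and "X \<in> measurable M N"
    and "Y \<in> measurable M (count_space UNIV)"
    and "\<forall>\<omega>\<in>space M. Y \<omega> \<in> {1..K}"
    and "\<forall>x\<in>space N. in_simplex K (f x)"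
    and "\<forall>l\<in>{1..K}. (\<lambda>x. f x l) \<in> borel_measurable N"
    and "integrable M (\<lambda>\<omega>. loss (X \<omega>) (Y \<omega>))"
    and "integrable M (\<lambda>\<omega>. label_rank K f (X \<omega>) (Y \<omega>) * loss (X \<omega>) (Y \<omega>))"
    and "(\<integral>\<omega>. (label_rank K f (X \<omega>) (Y \<omega>) - 1) * (loss (X \<omega>) (Y \<omega>) - 1) \<partial>M)
            \<ge> - (\<integral>\<omega>. loss (X \<omega>) (Y \<omega>) \<partial>M)
         \<or> ((AE \<omega> in M. f (X \<omega>) (Y \<omega>) > 0) \<and> (\<forall>x y. loss x y = - ln (f x y)))"
  shows "(\<integral>\<omega>. label_rank K f (X \<omega>) (Y \<omega>) - 1 \<partial>M)
           \<le> (\<integral>\<omega>. label_rank K f (X \<omega>) (Y \<omega>) * loss (X \<omega>) (Y \<omega>) \<partial>M)"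
proof -
  interpret prob_space M by fact
  let ?R = "\<lambda>\<omega>. label_rank K f (X \<omega>) (Y \<omega>)"
  let ?L = "\<lambda>\<omega>. loss (X \<omega>) (Y \<omega>)"
  have "integrable M ?R"
  proof (rule integrable_const_bound[where B = "real K"])
    show "?R \<in> borel_measurable M"
      using assms(2-4,6) by (rule measurable_label_rank)
  qed (simp add: label_rank_nonneg label_rank_le_card)
  from assms(9) show ?thesis
  proof
    assume "- (\<integral>\<omega>. ?L \<omega> \<partial>M) \<le> (\<integral>\<omega>. (?R \<omega> - 1) * (?L \<omega> - 1) \<partial>M)"
    with \<open>integrable M ?R\<close> assms(7,8) show ?thesis
      by (intro integral_minus_one_le_integral_mult) unfold_locales
  next
    assume cross_entropy: "(AE \<omega> in M. f (X \<omega>) (Y \<omega>) > 0) \<and> (\<forall>x y. loss x y = - ln (f x y))"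
    have "AE \<omega> in M. ?R \<omega> - 1 \<le> ?R \<omega> * ?L \<omega>"
      using cross_entropy
    proof (elim conjE AE_mp, intro AE_I2 impI)
      fix \<omega> assume \<omega>: "\<omega> \<in> space M" and "0 < f (X \<omega>) (Y \<omega>)"
      moreover have "in_simplex K (f (X \<omega>))"
        using assms(5) measurable_space[OF assms(2) \<omega>] by blast
      ultimately have "?R \<omega> - 1 \<le> ?R \<omega> * - ln (f (X \<omega>) (Y \<omega>))"
        using assms(4) by (intro label_rank_minus_one_le_cross_entropy) auto
      then show "?R \<omega> - 1 \<le> ?R \<omega> * ?L \<omega>"
        using cross_entropy by simp
    qed
    with \<open>integrable M ?R\<close> assms(8) show ?thesis
      by (intro integral_mono_AE) auto
  qed
qed

end
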